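(* Let $p$ be an odd prime, $a_1,a_2,a_3\in\mathbb{F}_p$, $s=3+a_1+a_2+a_3$, and let $x\neq(0,0,0)$ be a solution in $\mathbb{F}_p^3$ of \[ x_1^2+x_2^2+x_3^2+a_1x_2x_3+a_2x_1x_3+a_3x_1x_2 = s\,x_1x_2x_3 \] with $x_i = 0$ for some index $i$ (indices modulo $3$). Let $m_k$ ($k=1,2,3$) replace $x_k$ by $-x_k + s x_{k-1}x_{k+1} - a_{k+1}x_{k-1} - a_{k-1}x_{k+1}$ leaving the other coordinates unchanged, let $\rho = m_{i+1}\circ m_{i-1}$, and let $N$ be the order of $\rho$ as a permutation of the nonzero solutions with $i$-th coordinate $0$. If $N\geq 2$, then the $2N$ points \[ x,\ \rho x,\ \ldots,\ \rho^{N-1}x,\ m_{i-1}x,\ m_{i-1}\rho x,\ \ldots,\ m_{i-1}\rho^{N-1}x \] are pairwise distinct. *)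

theory Defs
  imports "HOL-Analysis.Finite_Cartesian_Product" "HOL-Library.Numeral_Type"
          "HOL-Computational_Algebra.Primes"
begin

text \<open>Points of F_p^3 are vectors indexed by the type 3 (integers mod 3), so that
  index arithmetic k-1, k+1 is automatically modulo 3. Index 3 coincides with index 0.\<close>

definition s_param :: "'a::field ^ 3 \<Rightarrow> 'a" where
  "s_param a = 3 + a$1 + a$2 + a$3"

definition markov_eq :: "'a::field ^ 3 \<Rightarrow> 'a ^ 3 \<Rightarrow> bool" where
  "markov_eq a x \<longleftrightarrow>
     (x$1)^2 + (x$2)^2 + (x$3)^2 + a$1 * x$2 * x$3 + a$2 * x$1 * x$3 + a$3 * x$1 * x$2
       = s_param a * x$1 * x$2 * x$3"

definition move :: "'a::field ^ 3 \<Rightarrow> 3 \<Rightarrow> 'a ^ 3 \<Rightarrow> 'a ^ 3" where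
  "move a k x = (\<chi> j. if j = k then
       - x$k + s_param a * x$(k-1) * x$(k+1) - a$(k+1) * x$(k-1) - a$(k-1) * x$(k+1)
     else x$j)"

definition rot :: "'a::field ^ 3 \<Rightarrow> 3 \<Rightarrow> 'a ^ 3 \<Rightarrow> 'a ^ 3" where
  "rot a i = move a (i+1) \<circ> move a (i-1)"

definition sol_plane :: "'a::field ^ 3 \<Rightarrow> 3 \<Rightarrow> ('a ^ 3) set" where
  "sol_plane a i = {y. markov_eq a y \<and> y \<noteq> 0 \<and> y$i = 0}"

definition rot_order :: "'a::field ^ 3 \<Rightarrow> 3 \<Rightarrow> nat" where
  "rot_order a i = (LEAST n. n > 0 \<and> (\<forall>y\<in>sol_plane a i. (rot a i ^^ n) y = y))"

end

theory Submission
  imports Defs "HOL-Analysis.Cartesian_Space"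
begin

(* On the plane x_i = 0, with u = x_{i+1}, v = x_{i-1} and c = a_i, the equation becomes
   u^2 + v^2 + c u v = 0 and both m_{i-1}: v -> -v - c u and m_{i+1}: u -> -u - c v act
   linearly, so rho is a linear map of the plane. A short computation shows that rho sends
   every solution to a multiple of itself, whereas m_{i-1} x is not a multiple of x unless
   c^2 = 4; and c^2 = 4 forces rho to fix all solutions, i.e. N = 1.
   Since rho^d m_{i-1} rho^d = m_{i-1}, a power rho^d fixing x also fixes m_{i-1} x, hence the
   whole plane, which the minimality of N excludes for 0 < d < N. Similarly
   m_{i-1} rho^k x = rho^j x would give m_{i-1} x = rho^(j+k) x, a multiple of x. *)

lemma inj_on_funpow_if_no_shorter_period:
  assumes "inj f" "\<And>d. 0 < d \<Longrightarrow> d < n \<Longrightarrow> (f ^^ d) x \<noteq> x"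
  shows "inj_on (\<lambda>k. (f ^^ k) x) {0..<n}"
proof -
  have "(f ^^ k) x \<noteq> (f ^^ l) x" if "k < l" "l < n" for k l
  proof
    assume "(f ^^ k) x = (f ^^ l) x"
    also have "\<dots> = (f ^^ (k + (l - k))) x"
      using that by simp
    also have "\<dots> = (f ^^ k) ((f ^^ (l - k)) x)"
      by (simp add: funpow_add)
    finally have "(f ^^ (l - k)) x = x"
      using inj_fn[OF assms(1), of k] by (simp add: inj_eq)
    with assms(2)[of "l - k"] that show False by (simp add: less_imp_diff_less)
  qed
  then show ?thesis
    unfolding inj_on_def by (metis atLeastLessThan_iff linorder_neqE_nat)
qed


lemma index3_arith:
  fixes i :: 3
  shows "i - 1 - 1 = i + 1" "i - 1 + 1 = i" "i + 1 + 1 = i - 1" "i + 1 - 1 = i"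
    and "i + 1 \<noteq> i" "i - 1 \<noteq> i"
  using exhaust_3[of i] by auto

lemma index3_cases:
  fixes i j :: 3
  shows "j = i \<or> j = i + 1 \<or> j = i - 1"
  using exhaust_3[of i] exhaust_3[of j] by auto

lemma vec3_eq_iff:
  fixes y z :: "'a ^ 3"
  shows "y = z \<longleftrightarrow> y$i = z$i \<and> y$(i+1) = z$(i+1) \<and> y$(i-1) = z$(i-1)"
  unfolding vec_eq_iff using index3_cases[of _ i] by metis

lemma markov_eq_on_plane:
  assumes "y$i = 0"
  shows "markov_eq a y \<longleftrightarrow> (y$(i+1))^2 + (y$(i-1))^2 + a$i * y$(i+1) * y$(i-1) = 0"
proof -
  have numerals: "(0::3) = 3" "(4::3) = 1"
    by simp_all
  show ?thesis
    using exhaust_3[of i] assms by (auto simp: markov_eq_def numerals algebra_simps)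
qed

lemma move_involutive: "move a k (move a k y) = y"
  unfolding move_def vec_eq_iff using index3_arith[of k] by auto

lemma inj_move: "inj (move a k)"
  by (metis injI move_involutive)

lemma move_pred_on_plane:
  assumes "y$i = 0"
  shows "move a (i-1) y $ i = 0" "move a (i-1) y $ (i+1) = y$(i+1)"
    and "move a (i-1) y $ (i-1) = - y$(i-1) - a$i * y$(i+1)"
  using assms unfolding move_def by (auto simp: index3_arith)

lemma move_succ_on_plane:
  assumes "y$i = 0"
  shows "move a (i+1) y $ i = 0" "move a (i+1) y $ (i-1) = y$(i-1)"
    and "move a (i+1) y $ (i+1) = - y$(i+1) - a$i * y$(i-1)"
  using assms unfolding move_def by (auto simp: index3_arith)

lemma rot_on_plane:
  assumes "y$i = 0"
  shows "rot a i y $ i = 0"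
    and "rot a i y $ (i+1) = - y$(i+1) - a$i * (- y$(i-1) - a$i * y$(i+1))"
    and "rot a i y $ (i-1) = - y$(i-1) - a$i * y$(i+1)"
  using assms by (simp_all add: rot_def move_pred_on_plane move_succ_on_plane)

lemma funpow_rot_on_plane: "y$i = 0 \<Longrightarrow> (rot a i ^^ n) y $ i = 0"
  by (induction n) (simp_all add: rot_on_plane)

lemma inj_rot: "inj (rot a i)"
  unfolding rot_def by (intro inj_compose inj_move)

lemma rot_sol_plane:
  assumes "y \<in> sol_plane a i"
  shows "rot a i y \<in> sol_plane a i"
proof -
  have y: "markov_eq a y" "y \<noteq> 0" "y$i = 0"
    using assms by (auto simp: sol_plane_def)
  have "rot a i y \<noteq> rot a i 0"
    using y(2) inj_rot by (metis injD)
  moreover have "rot a i 0 = 0"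
    by (simp add: rot_def move_def vec_eq_iff)
  moreover have "markov_eq a (rot a i y)"
    using y(1) unfolding markov_eq_on_plane[OF rot_on_plane(1)[OF y(3)]]
      markov_eq_on_plane[OF y(3)] rot_on_plane[OF y(3)]
    by (simp add: algebra_simps power2_eq_square)
  ultimately show ?thesis
    using rot_on_plane(1)[OF y(3)] by (simp add: sol_plane_def)
qed

lemma funpow_rot_sol_plane: "y \<in> sol_plane a i \<Longrightarrow> (rot a i ^^ n) y \<in> sol_plane a i"
  by (induction n) (simp_all add: rot_sol_plane)

lemma rot_move_pred_rot: "rot a i (move a (i-1) (rot a i y)) = move a (i-1) y"
  by (simp add: rot_def move_involutive)

lemma funpow_rot_move_pred_funpow_rot:
  "(rot a i ^^ n) (move a (i-1) ((rot a i ^^ n) y)) = move a (i-1) y"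
proof (induction n arbitrary: y)
  case 0
  show ?case by simp
next
  case (Suc n)
  have "(rot a i ^^ Suc n) (move a (i-1) ((rot a i ^^ Suc n) y))
      = (rot a i ^^ n) (rot a i (move a (i-1) (rot a i ((rot a i ^^ n) y))))"
    by (simp only: funpow.simps(2) funpow_swap1 o_apply)
  also have "\<dots> = move a (i-1) y"
    by (simp add: rot_move_pred_rot Suc)
  finally show ?case .
qed

lemma rot_plane_linear:
  assumes "y$i = 0" "z$i = 0"
  shows "rot a i (\<alpha> *s y + \<beta> *s z) = \<alpha> *s rot a i y + \<beta> *s rot a i z"
proof -
  have "(\<alpha> *s y + \<beta> *s z) $ i = 0"
    using assms by simp
  then show ?thesis
    using assms by (simp add: vec3_eq_iff[where i=i] rot_on_plane) (simp add: algebra_simps)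
qed

lemma funpow_rot_plane_linear:
  assumes "y$i = 0" "z$i = 0"
  shows "(rot a i ^^ n) (\<alpha> *s y + \<beta> *s z) = \<alpha> *s (rot a i ^^ n) y + \<beta> *s (rot a i ^^ n) z"
  by (induction n) (simp_all add: rot_plane_linear funpow_rot_on_plane assms)

definition plane_det :: "3 \<Rightarrow> 'a::field ^ 3 \<Rightarrow> 'a ^ 3 \<Rightarrow> 'a" where
  "plane_det i y z = y$(i+1) * z$(i-1) - y$(i-1) * z$(i+1)"

lemma plane_decomposition:
  assumes "y$i = 0" "z$i = 0" "w$i = 0" "plane_det i y z \<noteq> 0"
  shows "w = (plane_det i w z / plane_det i y z) *s y + (plane_det i y w / plane_det i y z) *s z"
  using assms by (simp add: vec3_eq_iff[where i=i] plane_det_def divide_simps) (simp add: algebra_simps)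

lemma funpow_rot_fixes_plane:
  assumes "y$i = 0" "z$i = 0" "plane_det i y z \<noteq> 0"
    and "(rot a i ^^ n) y = y" "(rot a i ^^ n) z = z" "w$i = 0"
  shows "(rot a i ^^ n) w = w"
  using plane_decomposition[OF assms(1,2,6,3)] funpow_rot_plane_linear[OF assms(1,2)] assms(4,5)
  by metis

lemma plane_det_rot:
  assumes "y$i = 0" "markov_eq a y"
  shows "plane_det i y (rot a i y) = 0"
proof -
  have "plane_det i y (rot a i y)
      = - a$i * ((y$(i+1))^2 + (y$(i-1))^2 + a$i * y$(i+1) * y$(i-1))"
    unfolding plane_det_def rot_on_plane[OF assms(1)] by (simp add: algebra_simps power2_eq_square)
  then show ?thesis
    using assms markov_eq_on_plane[OF assms(1)] by simp
qed

lemma plane_det_trans: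
  assumes "plane_det i y z = 0" "plane_det i z w = 0" "z$(i+1) \<noteq> 0 \<or> z$(i-1) \<noteq> 0"
  shows "plane_det i y w = 0"
proof -
  have "z$(i+1) * plane_det i y w = y$(i+1) * plane_det i z w + w$(i+1) * plane_det i y z"
    and "z$(i-1) * plane_det i y w = y$(i-1) * plane_det i z w + w$(i-1) * plane_det i y z"
    by (simp_all add: plane_det_def algebra_simps)
  then show ?thesis
    using assms by auto
qed

lemma plane_det_funpow_rot:
  assumes "y \<in> sol_plane a i"
  shows "plane_det i y ((rot a i ^^ n) y) = 0"
proof (induction n)
  case 0
  show ?case by (simp add: plane_det_def)
next
  case (Suc n)
  let ?z = "(rot a i ^^ n) y"
  have z: "?z \<in> sol_plane a i"
    using assms by (rule funpow_rot_sol_plane)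
  then have "plane_det i ?z (rot a i ?z) = 0"
    by (simp add: plane_det_rot sol_plane_def)
  moreover have "?z$(i+1) \<noteq> 0 \<or> ?z$(i-1) \<noteq> 0"
    using z by (auto simp: sol_plane_def vec3_eq_iff[where i=i])
  ultimately show ?case
    using Suc plane_det_trans by simp
qed

lemma plane_det_move_pred:
  assumes "y \<in> sol_plane a i" "(a$i)^2 \<noteq> 4"
  shows "plane_det i y (move a (i-1) y) \<noteq> 0"
proof -
  let ?u = "y$(i+1)" and ?v = "y$(i-1)" and ?c = "a$i"
  have y: "y$i = 0" "y \<noteq> 0" "markov_eq a y"
    using assms(1) by (auto simp: sol_plane_def)
  have Q: "?u^2 + ?v^2 + ?c * ?u * ?v = 0"
    using y markov_eq_on_plane by blast
  have "?u \<noteq> 0"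
  proof
    assume "?u = 0"
    with Q have "?v = 0" by simp
    with \<open>?u = 0\<close> y(1,2) show False by (simp add: vec3_eq_iff[where i=i])
  qed
  moreover have "2 * ?v + ?c * ?u \<noteq> 0"
  proof
    assume "2 * ?v + ?c * ?u = 0"
    moreover have "4 * (?u^2 + ?v^2 + ?c * ?u * ?v) = (2 * ?v + ?c * ?u)^2 + (4 - ?c^2) * ?u^2"
      by (simp add: algebra_simps power2_eq_square)
    ultimately have "(4 - ?c^2) * ?u^2 = 0"
      using Q by simp
    with assms(2) \<open>?u \<noteq> 0\<close> show False by simp
  qed
  moreover have "plane_det i y (move a (i-1) y) = - ?u * (2 * ?v + ?c * ?u)"
    unfolding plane_det_def move_pred_on_plane[OF y(1)] by (simp add: algebra_simps)
  ultimately show ?thesis by simp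
qed

lemma rot_fixes_sol_plane_if_sq_eq_4:
  assumes "y \<in> sol_plane a i" "(a$i)^2 = 4"
  shows "rot a i y = y"
proof -
  let ?u = "y$(i+1)" and ?v = "y$(i-1)" and ?c = "a$i"
  have y: "y$i = 0" "markov_eq a y"
    using assms(1) by (auto simp: sol_plane_def)
  have "?c = 2 \<or> ?c = -2"
    using assms(2) power2_eq_iff[of ?c 2] by simp
  then obtain e where e: "e^2 = 1" "?c = 2 * e"
    by (metis mult.right_neutral mult_minus_right power2_minus power_one)
  have "(?u + e * ?v)^2 = ?u^2 + ?v^2 + ?c * ?u * ?v"
    using e by (simp add: algebra_simps power2_eq_square)
  also have "\<dots> = 0"
    using y markov_eq_on_plane by blast
  finally have line: "?u + e * ?v = 0"
    by simp
  have "rot a i y $ (i+1) - ?u = 2 * (?u + e * ?v) + (?c^2 - 4) * ?u"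
    and "rot a i y $ (i-1) - ?v = - 2 * e * (?u + e * ?v) + 2 * (e^2 - 1) * ?v"
    unfolding rot_on_plane[OF y(1)] using e(2) by (simp_all add: algebra_simps power2_eq_square)
  then show ?thesis
    using line e(1) assms(2) y(1) rot_on_plane(1)[OF y(1)] by (simp add: vec3_eq_iff[where i=i])
qed

lemma sol_plane_not_fixed_below_rot_order:
  assumes "0 < n" "n < rot_order a i"
  shows "\<exists>y\<in>sol_plane a i. (rot a i ^^ n) y \<noteq> y"
  using not_less_Least[of n "\<lambda>n. n > 0 \<and> (\<forall>y\<in>sol_plane a i. (rot a i ^^ n) y = y)"] assms
  unfolding rot_order_def by auto

lemma sq_ne_4_if_rot_order_ge_2:
  assumes "rot_order a i \<ge> 2"
  shows "(a$i)^2 \<noteq> 4"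
  using assms sol_plane_not_fixed_below_rot_order[where n=1 and a=a and i=i]
    rot_fixes_sol_plane_if_sq_eq_4
  by fastforce

lemma funpow_rot_ne_self:
  assumes "x \<in> sol_plane a i" "(a$i)^2 \<noteq> 4" "0 < n" "n < rot_order a i"
  shows "(rot a i ^^ n) x \<noteq> x"
proof
  assume fixes_x: "(rot a i ^^ n) x = x"
  then have "(rot a i ^^ n) (move a (i-1) x) = move a (i-1) x"
    using funpow_rot_move_pred_funpow_rot[where a=a and i=i and n=n and y=x] by simp
  then have "(rot a i ^^ n) w = w" if "w$i = 0" for w
    using funpow_rot_fixes_plane[OF _ _ plane_det_move_pred[OF assms(1,2)] fixes_x] that assms(1)
    by (simp add: sol_plane_def move_pred_on_plane)
  then show False
    using sol_plane_not_fixed_below_rot_order[OF assms(3,4)] by (auto simp: sol_plane_def)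
qed

lemma funpow_rot_ne_move_pred_funpow_rot:
  assumes "x \<in> sol_plane a i" "(a$i)^2 \<noteq> 4"
  shows "(rot a i ^^ j) x \<noteq> move a (i-1) ((rot a i ^^ k) x)"
proof
  assume "(rot a i ^^ j) x = move a (i-1) ((rot a i ^^ k) x)"
  then have "(rot a i ^^ (k + j)) x = move a (i-1) x"
    using funpow_rot_move_pred_funpow_rot[where a=a and i=i and n=k and y=x] by (simp add: funpow_add)
  then show False
    using plane_det_funpow_rot[OF assms(1), of "k + j"] plane_det_move_pred[OF assms] by simp
qed

theorem proposition2p2:
  fixes a x :: "'a::{field,finite} ^ 3" and i :: 3
  assumes "prime CARD('a)" and "odd CARD('a)"
    and "markov_eq a x" and "x \<noteq> 0" and "x$i = 0"
    and "rot_order a i \<ge> 2"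
  shows "distinct (map (\<lambda>j. (rot a i ^^ j) x) [0..<rot_order a i]
                   @ map (\<lambda>j. move a (i-1) ((rot a i ^^ j) x)) [0..<rot_order a i])"
proof -
  have x: "x \<in> sol_plane a i"
    using assms(3-5) by (simp add: sol_plane_def)
  have sq: "(a$i)^2 \<noteq> 4"
    using assms(6) by (rule sq_ne_4_if_rot_order_ge_2)
  have orbit: "inj_on (\<lambda>j. (rot a i ^^ j) x) {0..<rot_order a i}"
    using inj_rot funpow_rot_ne_self[OF x sq] by (rule inj_on_funpow_if_no_shorter_period)
  moreover have "inj_on (\<lambda>j. move a (i-1) ((rot a i ^^ j) x)) {0..<rot_order a i}"
    using orbit by (simp add: inj_on_def inj_eq[OF inj_move])
  moreover have "(rot a i ^^ j) x \<noteq> move a (i-1) ((rot a i ^^ k) x)" for j k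
    using x sq by (rule funpow_rot_ne_move_pred_funpow_rot)
  ultimately show ?thesis
    unfolding distinct_append distinct_map set_map set_upt using distinct_upt by blast
qed

end
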